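(* Let $f(x)=\frac{x}{1+rx+sx^2}$. The $(n,k)$-th entry of the inverse of the Riordan array $(f'(x),f(x))$ (an element of the derivative subgroup) is $$t_{n,k}=\sum_{j=0}^{n+1}\binom{n+1}{j}\binom{j}{n-k-j}s^{\,n-k-j}r^{\,2j+k-n}.$$
   Context: A Riordan array $(g(x),f(x))$ with $g(0)\ne0$, $f(0)=0$, $f'(0)\ne0$ is the lower-triangular matrix with $(n,k)$ entry $[x^n]g(x)f(x)^k$; products correspond to $(g,f)(u,v)=(g\,u(f),v(f))$ and inverses to $(g,f)^{-1}=(1/g(\bar f),\bar f)$ with $\bar f$ the compositional inverse. The derivative subgroup consists of arrays $(f'(x),f(x))$. $\binom{j}{m}=0$ unless $0\le m\le j$. *)

theory Defs
  imports "HOL-Computational_Algebra.Formal_Power_Series"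
begin

definition riordan :: "'a::comm_ring_1 fps \<Rightarrow> 'a fps \<Rightarrow> nat \<Rightarrow> nat \<Rightarrow> 'a" where
  "riordan g f n k = fps_nth (g * f ^ k) n"

text \<open>Product of infinite lower-triangular matrices (the sum is finite since the left factor
  vanishes above the diagonal).\<close>
definition lt_mult :: "(nat \<Rightarrow> nat \<Rightarrow> 'a::comm_ring_1) \<Rightarrow> (nat \<Rightarrow> nat \<Rightarrow> 'a) \<Rightarrow> nat \<Rightarrow> nat \<Rightarrow> 'a" where
  "lt_mult A B n k = (\<Sum>j\<le>n. A n j * B j k)"

definition id_matrix :: "nat \<Rightarrow> nat \<Rightarrow> 'a::comm_ring_1" where
  "id_matrix n k = (if n = k then 1 else 0)"

definition binom_int :: "nat \<Rightarrow> int \<Rightarrow> 'a::comm_ring_1" where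
  "binom_int j m = (if 0 \<le> m \<and> m \<le> int j then of_nat (j choose nat m) else 0)"

definition fRS :: "'a::field \<Rightarrow> 'a \<Rightarrow> 'a fps" where
  "fRS r s = fps_X * inverse (1 + fps_const r * fps_X + fps_const s * fps_X ^ 2)"

text \<open>The claimed entries t_{n,k}. Whenever the binomial factor is nonzero we have
  0 \<le> n-k-j and 0 \<le> 2j+k-n, so the natural-number exponents below are the true ones.\<close>
definition t_entry :: "'a::field \<Rightarrow> 'a \<Rightarrow> nat \<Rightarrow> nat \<Rightarrow> 'a" where
  "t_entry r s n k = (\<Sum>j=0..n+1. of_nat ((n+1) choose j)
      * binom_int j (int n - int k - int j)
      * s ^ nat (int n - int k - int j) * r ^ nat (2 * int j + int k - int n))"

end

theory Submission
  imports Defs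
begin

(*
  Write P = 1 + r x + s x^2, so that f = x / P.  Expanding P = 1 + x (r + s x) binomially
  twice shows t(n,k) = [x^(n-k)] P^(n+1), hence the (n,k) entry of T R, with R = (f', f),
  is [x^n] f' f^k P^(n+1).  Since f' f^k P^(k+2) = x^k (1 - s x^2), this is 0 for n < k
  and 1 for n = k, while for n = k + 1 + N it is [x^(N+1)] (1 - s x^2) P^N, which vanishes
  because the coefficients of P^N satisfy [x^(N+j)] P^N = s^j [x^(N-j)] P^N.  So T is a
  left inverse of R; as R has the right inverse (g', g) with g the compositional inverse
  of f, the two coincide.
*)

unbundle fps_syntax

definition lower_triangular :: "(nat \<Rightarrow> nat \<Rightarrow> 'a::zero) \<Rightarrow> bool" where
  "lower_triangular A \<longleftrightarrow> (\<forall>n k. n < k \<longrightarrow> A n k = 0)"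

lemma lt_mult_assoc:
  assumes "lower_triangular B"
  shows "lt_mult A (lt_mult B C) = lt_mult (lt_mult A B) C"
proof (intro ext)
  fix n k
  have "lt_mult A (lt_mult B C) n k = (\<Sum>j\<le>n. \<Sum>i\<le>n. A n j * (B j i * C i k))"
    unfolding lt_mult_def sum_distrib_left
  proof (rule sum.cong[OF refl])
    fix j assume "j \<in> {..n}"
    then show "(\<Sum>i\<le>j. A n j * (B j i * C i k)) = (\<Sum>i\<le>n. A n j * (B j i * C i k))"
      using assms by (intro sum.mono_neutral_left) (auto simp: lower_triangular_def)
  qed
  also have "\<dots> = lt_mult (lt_mult A B) C n k"
    unfolding lt_mult_def sum_distrib_right mult.assoc by (rule sum.swap)
  finally show "lt_mult A (lt_mult B C) n k = lt_mult (lt_mult A B) C n k" .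
qed

lemma lt_mult_id_left: "lt_mult id_matrix A = A"
  by (intro ext) (simp add: lt_mult_def id_matrix_def if_distrib[of "\<lambda>x. x * _"] cong: if_cong)

lemma lt_mult_id_right:
  assumes "lower_triangular A"
  shows "lt_mult A id_matrix = A"
proof (intro ext)
  fix n k
  show "lt_mult A id_matrix n k = A n k"
    using assms by (cases "k \<le> n")
      (auto simp: lt_mult_def id_matrix_def lower_triangular_def if_distrib[of "\<lambda>x. _ * x"]
        cong: if_cong)
qed

lemma lt_left_inverse_eq_right_inverse:
  assumes "lower_triangular L" "lower_triangular A"
    and "lt_mult L A = id_matrix" "lt_mult A R = id_matrix"
  shows "L = R"
proof -
  have "L = lt_mult L (lt_mult A R)" using assms(1,4) by (simp add: lt_mult_id_right)
  also have "\<dots> = lt_mult (lt_mult L A) R" using assms(2) by (rule lt_mult_assoc)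
  also have "\<dots> = R" using assms(3) by (simp add: lt_mult_id_left)
  finally show ?thesis .
qed

lemma riordan_lower_triangular:
  fixes a b :: "'a::comm_ring_1 fps"
  assumes "b $ 0 = 0"
  shows "lower_triangular (riordan a b)"
  unfolding lower_triangular_def riordan_def fps_mult_nth using assms
  by (auto intro!: sum.neutral simp: startsby_zero_power_prefix)

lemma fps_compose_nth_atMost:
  fixes E b :: "'a::comm_ring_1 fps"
  assumes "b $ 0 = 0" and "m \<le> n"
  shows "(E oo b) $ m = (\<Sum>j\<le>n. E $ j * (b ^ j) $ m)"
  unfolding fps_compose_nth atLeast0AtMost using assms
  by (intro sum.mono_neutral_left) (auto simp: startsby_zero_power_prefix)

lemma riordan_mult:
  fixes a b c d :: "'a::idom fps"
  assumes b0: "b $ 0 = 0"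
  shows "lt_mult (riordan a b) (riordan c d) = riordan (a * (c oo b)) (d oo b)"
proof (intro ext)
  fix n k
  define E where "E = c * d ^ k"
  have "lt_mult (riordan a b) (riordan c d) n k
      = (\<Sum>j\<le>n. \<Sum>i\<le>n. a $ i * (b ^ j) $ (n - i) * E $ j)"
    unfolding lt_mult_def riordan_def E_def fps_mult_nth atLeast0AtMost sum_distrib_right ..
  also have "\<dots> = (\<Sum>i\<le>n. a $ i * (\<Sum>j\<le>n. E $ j * (b ^ j) $ (n - i)))"
    by (subst sum.swap) (simp add: sum_distrib_left mult_ac)
  also have "\<dots> = (a * (E oo b)) $ n"
    using b0 by (simp add: fps_mult_nth atLeast0AtMost fps_compose_nth_atMost[where n=n])
  also have "\<dots> = riordan (a * (c oo b)) (d oo b) n k"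
    using b0 by (simp add: riordan_def E_def fps_compose_mult_distrib fps_compose_power mult.assoc)
  finally show "lt_mult (riordan a b) (riordan c d) n k = riordan (a * (c oo b)) (d oo b) n k" .
qed

lemma riordan_one_X: "riordan 1 fps_X = id_matrix"
  by (intro ext) (simp add: riordan_def id_matrix_def fps_X_power_nth)

lemma riordan_derivative_right_inverse:
  fixes f :: "'a::field fps"
  assumes f0: "f $ 0 = 0" and f1: "f $ 1 \<noteq> 0"
  shows "lt_mult (riordan (fps_deriv f) f) (riordan (fps_deriv (fps_inv f)) (fps_inv f)) = id_matrix"
proof -
  have "fps_deriv f * (fps_deriv (fps_inv f) oo f) = fps_deriv (fps_inv f oo f)"
    using f0 by (simp add: fps_compose_deriv mult.commute)
  then show ?thesis
    using f0 by (simp add: riordan_mult fps_inv[OF f0 f1] riordan_one_X)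
qed

definition quadratic_fps :: "'a::field \<Rightarrow> 'a \<Rightarrow> 'a fps" where
  "quadratic_fps r s = 1 + fps_const r * fps_X + fps_const s * fps_X ^ 2"

definition fps_nth_int :: "'a::zero fps \<Rightarrow> int \<Rightarrow> 'a" where
  "fps_nth_int F i = (if i < 0 then 0 else F $ nat i)"

lemma fps_nth_int_of_nat [simp]: "fps_nth_int F (int n) = F $ n"
  by (simp add: fps_nth_int_def)

lemma fps_nth_int_mult_quadratic:
  "fps_nth_int (F * quadratic_fps r s) i
     = fps_nth_int F i + r * fps_nth_int F (i - 1) + s * fps_nth_int F (i - 2)"
proof (cases "i < 0")
  case False
  then obtain n where i: "i = int n" by (metis nonneg_eq_int not_less)
  have "F * quadratic_fps r s = F + fps_const r * (fps_X ^ 1 * F) + fps_const s * (fps_X ^ 2 * F)"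
    by (simp add: quadratic_fps_def algebra_simps)
  then show ?thesis
    unfolding fps_nth_int_def i by (auto simp: fps_X_power_mult_nth nat_diff_distrib)
qed (simp add: fps_nth_int_def)

lemma quadratic_fps_power_nth_symmetric:
  "fps_nth_int (quadratic_fps r s ^ N) (int N + int j)
     = s ^ j * fps_nth_int (quadratic_fps r s ^ N) (int N - int j)"
proof (induction N arbitrary: j)
  case 0
  then show ?case by (simp add: fps_nth_int_def)
next
  case (Suc N)
  let ?c = "fps_nth_int (quadratic_fps r s ^ N)"
  have rec: "fps_nth_int (quadratic_fps r s ^ Suc N) i = ?c i + r * ?c (i - 1) + s * ?c (i - 2)" for i
    using fps_nth_int_mult_quadratic[of "quadratic_fps r s ^ N"] by (simp add: mult.commute)
  show ?case
  proof (cases j)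
    case (Suc j')
    have "?c (int N + int (j' + 2)) = s ^ (j' + 2) * ?c (int N - int (j' + 2))"
      and "?c (int N + int (j' + 1)) = s ^ (j' + 1) * ?c (int N - int (j' + 1))"
      and "?c (int N + int j') = s ^ j' * ?c (int N - int j')"
      by (fact Suc.IH)+
    then show ?thesis
      unfolding rec using Suc by (simp add: algebra_simps add_ac diff_diff_eq)
  qed simp
qed

lemma quadratic_fps_nth_0 [simp]: "quadratic_fps r s $ 0 = 1"
  by (simp add: quadratic_fps_def)

lemma fRS_eq: "fRS r s = fps_X * inverse (quadratic_fps r s)"
  by (simp add: fRS_def quadratic_fps_def)

lemma fRS_deriv:
  "fps_deriv (fRS r s) = inverse (quadratic_fps r s) ^ 2 * quadratic_fps 0 (- s)"
proof -
  define P where "P = quadratic_fps r s"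
  define Q where "Q = inverse P"
  have P0: "P $ 0 \<noteq> 0" by (simp add: P_def)
  have "Q * P = 1" unfolding Q_def using P0 by (rule inverse_mult_eq_1)
  then have QP: "Q = Q ^ 2 * P" by (simp add: power2_eq_square mult.assoc)
  have dQ: "fps_deriv Q = - fps_deriv P * Q ^ 2"
    unfolding Q_def using P0 by (rule fps_inverse_deriv)
  have "fps_deriv (fRS r s) = fps_X * fps_deriv Q + Q"
    by (simp add: fRS_eq Q_def P_def)
  also have "\<dots> = Q ^ 2 * (P - fps_X * fps_deriv P)"
    by (subst (2) QP) (simp add: dQ algebra_simps)
  also have "P - fps_X * fps_deriv P = quadratic_fps 0 (- s)"
    by (simp add: P_def quadratic_fps_def algebra_simps power2_eq_square fps_const_neg[symmetric]
        del: fps_const_neg)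
  finally show ?thesis by (simp add: Q_def P_def)
qed

lemma fRS_nth_0: "fRS r s $ 0 = 0"
  by (simp add: fRS_eq)

lemma fRS_nth_1: "fRS r s $ 1 = 1"
  by (simp add: fRS_eq)

lemma fRS_deriv_mult_power:
  "fps_deriv (fRS r s) * fRS r s ^ k * quadratic_fps r s ^ (k + 2)
     = fps_X ^ k * quadratic_fps 0 (- s)"
proof -
  define P where "P = quadratic_fps r s"
  have QP: "inverse P * P = 1" by (rule inverse_mult_eq_1) (simp add: P_def)
  have "Q ^ 2 * W * (fps_X * Q) ^ k * P ^ (k + 2) = fps_X ^ k * W * (Q * P) ^ (k + 2)"
    for Q W :: "'a fps"
    by (simp add: power_mult_distrib power_add power2_eq_square ac_simps)
  from this[of "inverse P"] show ?thesis
    unfolding fRS_deriv unfolding fRS_eq P_def[symmetric] QP by simp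
qed

(* The factor 1 - s x^2 is written as quadratic_fps 0 (- s) so that the recurrence
   fps_nth_int_mult_quadratic applies to it. *)
lemma quadratic_fps_power_mult_nth_Suc:
  "(quadratic_fps r s ^ N * quadratic_fps 0 (- s)) $ Suc N = 0"
proof -
  let ?c = "fps_nth_int (quadratic_fps r s ^ N)"
  have "(quadratic_fps r s ^ N * quadratic_fps 0 (- s)) $ Suc N
      = fps_nth_int (quadratic_fps r s ^ N * quadratic_fps 0 (- s)) (int N + int 1)"
    by (simp add: fps_nth_int_def nat_add_distrib)
  also have "\<dots> = ?c (int N + int 1) - s * ?c (int N - int 1)"
    by (simp add: fps_nth_int_mult_quadratic)
  also have "\<dots> = 0"
    by (simp only: quadratic_fps_power_nth_symmetric) simp
  finally show ?thesis .
qed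

lemma fRS_deriv_mult_power_nth:
  "(fps_deriv (fRS r s) * fRS r s ^ k * quadratic_fps r s ^ (n + 1)) $ n = id_matrix n k"
proof -
  define P where "P = quadratic_fps r s"
  define W :: "'a fps" where "W = quadratic_fps 0 (- s)"
  define A where "A = fps_deriv (fRS r s) * fRS r s ^ k"
  have AP: "A * P ^ (k + 2) = fps_X ^ k * W"
    unfolding A_def P_def W_def by (rule fRS_deriv_mult_power)
  consider "n < k" | "n = k" | "k < n" by linarith
  then have "(A * P ^ (n + 1)) $ n = id_matrix n k"
  proof cases
    case 1
    have A_factor: "A * P ^ (n + 1) = fps_X ^ k * (fps_deriv (fRS r s) * inverse P ^ k * P ^ (n + 1))"
      by (simp add: A_def fRS_eq P_def power_mult_distrib ac_simps)
    show ?thesis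
      unfolding A_factor using 1 by (simp add: fps_X_power_mult_nth id_matrix_def)
  next
    case 2
    have QP: "inverse P * P = 1" by (rule inverse_mult_eq_1) (simp add: P_def)
    have "A * P ^ (k + 2) * inverse P = A * P ^ (k + 1) * (inverse P * P)"
      by (simp add: ac_simps)
    then have "A * P ^ (k + 1) = A * P ^ (k + 2) * inverse P"
      by (simp add: QP)
    also have "\<dots> = fps_X ^ k * (W * inverse P)"
      by (simp only: AP mult.assoc)
    finally show ?thesis
      using 2 by (simp add: P_def W_def fps_X_power_mult_nth id_matrix_def)
  next
    case 3
    define N where "N = n - k - 1"
    have "n + 1 = (k + 2) + N" using 3 by (simp add: N_def)
    then have "A * P ^ (n + 1) = A * P ^ (k + 2) * P ^ N"
      by (simp only: power_add mult.assoc)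
    also have "\<dots> = fps_X ^ k * (P ^ N * W)"
      by (simp only: AP ac_simps)
    finally show ?thesis
      using 3 quadratic_fps_power_mult_nth_Suc[of r s N]
      by (simp add: P_def W_def N_def fps_X_power_mult_nth id_matrix_def Suc_diff_Suc)
  qed
  then show ?thesis by (simp add: A_def P_def)
qed

lemma linear_fps_power_nth:
  "((fps_const r + fps_const s * fps_X) ^ j) $ l
     = (if l \<le> j then of_nat (j choose l) * s ^ l * r ^ (j - l) else (0::'a::field))"
proof -
  have "(fps_const r + fps_const s * fps_X) ^ j
      = (\<Sum>i\<le>j. of_nat (j choose i) * (fps_const s * fps_X) ^ i * fps_const r ^ (j - i))"
    by (subst add.commute) (rule binomial_ring)
  also have "\<dots> = (\<Sum>i\<le>j. fps_const (of_nat (j choose i) * s ^ i * r ^ (j - i)) * fps_X ^ i)"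
    by (simp add: power_mult_distrib fps_const_power fps_of_nat[symmetric] mult_ac)
  finally show ?thesis
    by (simp add: fps_sum_nth fps_X_power_nth if_distrib[of "\<lambda>x. _ * x"] cong: if_cong)
qed

lemma quadratic_fps_power_nth:
  "(quadratic_fps r s ^ N) $ i = (\<Sum>j\<le>N. of_nat (N choose j) *
      (if i < j then 0 else ((fps_const r + fps_const s * fps_X) ^ j) $ (i - j)))"
proof -
  have "quadratic_fps r s = fps_X * (fps_const r + fps_const s * fps_X) + 1"
    by (simp add: quadratic_fps_def algebra_simps power2_eq_square)
  then have "quadratic_fps r s ^ N
      = (\<Sum>j\<le>N. of_nat (N choose j) * (fps_X ^ j * (fps_const r + fps_const s * fps_X) ^ j))"
    by (simp add: binomial_ring power_mult_distrib)
  then show ?thesis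
    by (simp add: fps_sum_nth fps_of_nat fps_X_power_mult_nth)
qed

lemma t_entry_eq_quadratic_fps_power_nth:
  "t_entry r s n k = (if k \<le> n then (quadratic_fps r s ^ (n + 1)) $ (n - k) else 0)"
proof (cases "k \<le> n")
  case True
  define i where "i = n - k"
  have "t_entry r s n k = (\<Sum>j\<le>n+1. of_nat ((n+1) choose j)
      * (if i < j then 0 else ((fps_const r + fps_const s * fps_X) ^ j) $ (i - j)))"
    unfolding t_entry_def atLeast0AtMost
  proof (rule sum.cong[OF refl])
    fix j
    have ij: "int n - int k - int j = int i - int j" "2 * int j + int k - int n = 2 * int j - int i"
      using True by (auto simp: i_def)
    have nat_ij: "nat (2 * int j - int i) = j + j - i" "nat (int i - int j) = i - j" by auto
    show "of_nat ((n+1) choose j) * binom_int j (int n - int k - int j)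
        * s ^ nat (int n - int k - int j) * r ^ nat (2 * int j + int k - int n)
      = of_nat ((n+1) choose j)
        * (if i < j then 0 else ((fps_const r + fps_const s * fps_X) ^ j) $ (i - j))"
      unfolding ij nat_ij linear_fps_power_nth binom_int_def
      by (auto simp: nat_diff_distrib of_nat_diff)
  qed
  also have "\<dots> = (quadratic_fps r s ^ (n + 1)) $ i"
    by (rule quadratic_fps_power_nth[symmetric])
  finally show ?thesis
    using True by (simp add: i_def)
qed (auto simp: t_entry_def binom_int_def intro!: sum.neutral)

lemma t_entry_lower_triangular: "lower_triangular (t_entry r s)"
  by (simp add: lower_triangular_def t_entry_eq_quadratic_fps_power_nth)

lemma t_entry_mult_riordan_fRS:
  "lt_mult (t_entry r s) (riordan (fps_deriv (fRS r s)) (fRS r s)) = id_matrix"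
proof (intro ext)
  fix n k
  have "lt_mult (t_entry r s) (riordan (fps_deriv (fRS r s)) (fRS r s)) n k
      = (\<Sum>j=0..n. (fps_deriv (fRS r s) * fRS r s ^ k) $ j
                     * (quadratic_fps r s ^ (n + 1)) $ (n - j))"
    unfolding lt_mult_def riordan_def atLeast0AtMost
    by (intro sum.cong refl) (simp add: t_entry_eq_quadratic_fps_power_nth mult.commute)
  also have "\<dots> = id_matrix n k"
    using fRS_deriv_mult_power_nth[of r s k n] by (simp add: fps_mult_nth)
  finally show "lt_mult (t_entry r s) (riordan (fps_deriv (fRS r s)) (fRS r s)) n k
      = id_matrix n k" .
qed

theorem mainTheorem13:
  fixes r s :: "'a::field"
  defines "f \<equiv> fRS r s"
  shows "(\<forall>n k. n < k \<longrightarrow> t_entry r s n k = 0)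
       \<and> lt_mult (riordan (fps_deriv f) f) (t_entry r s) = id_matrix
       \<and> lt_mult (t_entry r s) (riordan (fps_deriv f) f) = id_matrix"
proof -
  have f0: "f $ 0 = 0" and f1: "f $ 1 \<noteq> 0"
    using fRS_nth_0[of r s] fRS_nth_1[of r s] by (simp_all add: f_def)
  have TR: "lt_mult (t_entry r s) (riordan (fps_deriv f) f) = id_matrix"
    unfolding f_def by (rule t_entry_mult_riordan_fRS)
  have "t_entry r s = riordan (fps_deriv (fps_inv f)) (fps_inv f)"
    using t_entry_lower_triangular riordan_lower_triangular[OF f0] TR
      riordan_derivative_right_inverse[OF f0 f1]
    by (rule lt_left_inverse_eq_right_inverse)
  then have RT: "lt_mult (riordan (fps_deriv f) f) (t_entry r s) = id_matrix"
    using riordan_derivative_right_inverse[OF f0 f1] by simp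
  show ?thesis
    using t_entry_lower_triangular TR RT by (simp add: lower_triangular_def)
qed

end
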